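(* Consider the following algorithm \textsc{$\ell_\infty$-Minimization} on input $A\in\mathbb{R}^{n\times m}$, $b\in\mathbb{R}^n$ in the column span of $A$, $\epsilon>0$, $M>0$. Set $t=0$, $r^{(0)}=\mathbf{1}/m$, $t'=0$, $s=0\in\mathbb{R}^m$. While $\|r^{(t)}\|_1\le 1/\epsilon$: (i) let $x^{(t)}=\arg\min_{x:Ax=b}\sum_i r^{(t)}_i x_i^2$; (ii) if $\|x^{(t)}\|_\infty\le m^{1/3}M$, set $t'\leftarrow t'+1$ and $s\leftarrow s+x^{(t)}$; (iii) if $t'\ge 1$ and $\|s\|_\infty/t'\le(1+\epsilon)M$, return $s/t'$; (iv) let $\alpha^{(t)}_i=1$ if $|x^{(t)}_i|<(1+\epsilon)M$ and $\alpha^{(t)}_i=(x^{(t)}_i)^2/M^2$ otherwise; (v) if $\alpha^{(t)}=\mathbf{1}$, return $x^{(t)}$; (vi) set $r^{(t+1)}_i=r^{(t)}_i\alpha^{(t)}_i$ for all $i$ and $t\leftarrow t+1$. When the while loop exits, return $r^{(t)}/\|r^{(t)}\|_1$. Whenever this algorithm returns after the while loop exits, the returned vector $\bar r=r^{(t)}/\|r^{(t)}\|_1$ satisfies \[ \mathcal{E}_{\bar r}(b)\ \ge\ (1-\epsilon)^2M^2, \] where $\mathcal{E}_{\bar r}(b)=\min_{x:Ax=b}\sum_i \bar r_i x_i^2$.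
   Context: $\mathbf{1}$ is the all-ones vector in $\mathbb{R}^m$. *)

theory Defs
  imports "HOL-Analysis.Analysis"
begin

definition l1norm :: "real ^ 'm \<Rightarrow> real" where
  "l1norm v = (\<Sum>i\<in>UNIV. \<bar>v $ i\<bar>)"

definition linfnorm :: "real ^ 'm \<Rightarrow> real" where
  "linfnorm v = Max (range (\<lambda>i. \<bar>v $ i\<bar>))"

definition wsq :: "real ^ 'm \<Rightarrow> real ^ 'm \<Rightarrow> real" where
  "wsq r x = (\<Sum>i\<in>UNIV. r $ i * (x $ i)^2)"

definition energy :: "real ^ 'm ^ 'n \<Rightarrow> real ^ 'm \<Rightarrow> real ^ 'n \<Rightarrow> real" where
  "energy A r b = Inf {wsq r x | x. A *v x = b}"

definition argmin_x :: "real ^ 'm ^ 'n \<Rightarrow> real ^ 'm \<Rightarrow> real ^ 'n \<Rightarrow> real ^ 'm" where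
  "argmin_x A r b = (THE x. A *v x = b \<and> (\<forall>y. A *v y = b \<longrightarrow> wsq r x \<le> wsq r y))"

text \<open>State of the while loop: (r, t', s); the counter t is implicit.
  Outcomes: still running, returned inside the loop (steps iii / v),
  or returned after the loop exits.\<close>
datatype 'm alg_state =
    Running "real ^ 'm" nat "real ^ 'm"
  | ReturnInLoop "real ^ 'm"
  | ReturnAfterLoop "real ^ 'm"

definition alpha :: "real \<Rightarrow> real \<Rightarrow> real ^ 'm \<Rightarrow> real ^ 'm" where
  "alpha \<epsilon> M x = (\<chi> i. if \<bar>x $ i\<bar> < (1 + \<epsilon>) * M then 1 else (x $ i)^2 / M^2)"

definition alg_step :: "real ^ 'm ^ 'n \<Rightarrow> real ^ 'n \<Rightarrow> real \<Rightarrow> real \<Rightarrow>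
    real ^ 'm \<Rightarrow> nat \<Rightarrow> real ^ 'm \<Rightarrow> 'm alg_state" where
  "alg_step A b \<epsilon> M r tp s =
    (if \<not> (l1norm r \<le> 1 / \<epsilon>) then ReturnAfterLoop ((1 / l1norm r) *\<^sub>R r)
     else
       (let x = argmin_x A r b;
            good = (linfnorm x \<le> real CARD('m) powr (1/3) * M);
            tp' = (if good then tp + 1 else tp);
            s' = (if good then s + x else s)
        in if tp' \<ge> 1 \<and> linfnorm s' / real tp' \<le> (1 + \<epsilon>) * M
           then ReturnInLoop ((1 / real tp') *\<^sub>R s')
           else (let a = alpha \<epsilon> M x in
                 if a = (\<chi> i. 1) then ReturnInLoop x
                 else Running (\<chi> i. r $ i * a $ i) tp' s')))"

fun alg_run :: "real ^ 'm ^ 'n \<Rightarrow> real ^ 'n \<Rightarrow> real \<Rightarrow> real \<Rightarrow> nat \<Rightarrow> 'm alg_state" where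
  "alg_run A b \<epsilon> M 0 = Running (\<chi> i. 1 / real CARD('m)) 0 0"
| "alg_run A b \<epsilon> M (Suc k) =
     (case alg_run A b \<epsilon> M k of
        Running r tp s \<Rightarrow> alg_step A b \<epsilon> M r tp s
      | st \<Rightarrow> st)"

end

theory Submission
  imports Defs
begin

text \<open>Scaling coordinates by sqrt r turns sum_i r_i x_i^2 into a squared Euclidean norm, so
  the minimiser x of the r-energy on {x. A x = b} is the closest point to 0 of a closed convex
  set: it exists, is unique, and satisfies sum_i r_i x_i (y_i - x_i) >= 0 for every feasible y.

  The weights keep the invariant sum_i r_i y_i^2 >= M^2 (|r|_1 - 1) for all feasible y, which
  holds initially since |r|_1 = 1. Coordinatewise, r alpha y^2 - (2 r x y - r x^2) equals
  r (y - x)^2 when alpha = 1 and r (x y / M - M)^2 + M^2 r (alpha - 1) when alpha = x^2 / M^2;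
  summing and using the first-order condition gives
  sum_i r_i alpha_i y_i^2 >= E_r(b) + M^2 (|r alpha|_1 - |r|_1), so the invariant survives each
  reweighting. When the loop exits, |r|_1 > 1/\<epsilon>, and normalising yields
  E >= M^2 (1 - 1/|r|_1) >= (1 - \<epsilon>) M^2 >= (1 - \<epsilon>)^2 M^2.\<close>

definition weight_scale :: "real ^ 'm \<Rightarrow> real ^ 'm \<Rightarrow> real ^ 'm" where
  "weight_scale r x = (\<chi> i. sqrt (r $ i) * x $ i)"

lemma linear_weight_scale: "linear (weight_scale r)"
  by (rule linearI) (simp_all add: weight_scale_def vec_eq_iff algebra_simps)

lemma inner_weight_scale:
  assumes "\<And>i. 0 \<le> r $ i"
  shows "inner (weight_scale r x) (weight_scale r y) = (\<Sum>i\<in>UNIV. r $ i * x $ i * y $ i)"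
  unfolding weight_scale_def inner_vec_def
  by (intro sum.cong) (use assms in \<open>auto simp: algebra_simps real_sqrt_mult[symmetric]\<close>)

lemma wsq_eq_inner_weight_scale:
  assumes "\<And>i. 0 \<le> r $ i"
  shows "wsq r x = inner (weight_scale r x) (weight_scale r x)"
  using assms by (simp add: inner_weight_scale wsq_def power2_eq_square mult.assoc)

lemma inj_weight_scale:
  assumes "\<And>i. 0 < r $ i"
  shows "inj (weight_scale r)"
proof (rule injI)
  fix x y assume "weight_scale r x = weight_scale r y"
  hence "sqrt (r $ i) * x $ i = sqrt (r $ i) * y $ i" for i
    by (metis vec_lambda_beta weight_scale_def)
  thus "x = y" using assms by (simp add: vec_eq_iff) (metis less_irrefl)
qed

lemma solution_set_eq_vimage: "{x. A *v x = b} = (\<lambda>x. A *v x) -` {b}"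
  by auto

lemma convex_solution_set: "convex {x. (A :: real ^ 'm ^ 'n) *v x = b}"
  unfolding solution_set_eq_vimage
  by (rule convex_linear_vimage[OF bounded_linear.linear[OF matrix_vector_mul_bounded_linear]]) simp

lemma closed_solution_set: "closed {x. (A :: real ^ 'm ^ 'n) *v x = b}"
  unfolding solution_set_eq_vimage
  by (rule closed_vimage[OF closed_singleton linear_continuous_on[OF matrix_vector_mul_bounded_linear]])

lemma argmin_x_first_order:
  fixes A :: "real ^ 'm ^ 'n"
  assumes r_pos: "\<And>i. 0 < r $ i" and solvable: "A *v x0 = b"
  shows "A *v argmin_x A r b = b"
    and "A *v y = b \<Longrightarrow> 0 \<le> (\<Sum>i\<in>UNIV. r $ i * argmin_x A r b $ i * (y - argmin_x A r b) $ i)"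
proof -
  let ?S = "{x. A *v x = b}" and ?D = "weight_scale r"
  let ?K = "?D ` ?S"
  have r_nonneg: "\<And>i. 0 \<le> r $ i" using r_pos less_imp_le by blast
  have K: "convex ?K" "closed ?K" "?K \<noteq> {}"
    using convex_linear_image[OF linear_weight_scale convex_solution_set]
      closed_injective_linear_image[OF closed_solution_set linear_weight_scale
        inj_weight_scale[OF r_pos]]
      solvable by auto
  have wsq_le_iff: "wsq r x \<le> wsq r y \<longleftrightarrow> dist 0 (?D x) \<le> dist 0 (?D y)" for x y
    by (simp add: wsq_eq_inner_weight_scale[OF r_nonneg] norm_le)
  define is_min where "is_min x \<longleftrightarrow> A *v x = b \<and> (\<forall>y. A *v y = b \<longrightarrow> wsq r x \<le> wsq r y)" for x
  have is_min_iff: "is_min x \<longleftrightarrow> x \<in> ?S \<and> (\<forall>z\<in>?K. dist 0 (?D x) \<le> dist 0 z)" for x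
    by (auto simp: is_min_def wsq_le_iff)
  have "\<exists>!x. is_min x"
  proof (rule ex_ex1I)
    obtain x where "x \<in> ?S" "closest_point ?K 0 = ?D x"
      using closest_point_in_set[OF K(2,3)] by auto
    thus "\<exists>x. is_min x"
      using closest_point_exists(2)[OF K(2,3)] is_min_iff by metis
  next
    fix x1 x2 assume "is_min x1" "is_min x2"
    hence "?D x1 = ?D x2"
      using any_closest_point_unique[OF K(1,2)] is_min_iff by blast
    thus "x1 = x2" using inj_weight_scale[OF r_pos] by (simp add: inj_eq)
  qed
  hence min: "is_min (argmin_x A r b)"
    unfolding argmin_x_def is_min_def by (rule theI')
  thus "A *v argmin_x A r b = b" by (simp add: is_min_def)
  assume "A *v y = b"
  then have "inner (0 - ?D (argmin_x A r b)) (?D y - ?D (argmin_x A r b)) \<le> 0"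
    using any_closest_point_dot[OF K(1,2)] min is_min_iff by blast
  thus "0 \<le> (\<Sum>i\<in>UNIV. r $ i * argmin_x A r b $ i * (y - argmin_x A r b) $ i)"
    by (simp add: linear_diff[OF linear_weight_scale, symmetric] inner_weight_scale[OF r_nonneg])
qed

lemma alpha_ge_one:
  assumes "0 < \<epsilon>" "0 < M"
  shows "1 \<le> alpha \<epsilon> M x $ i"
proof (cases "\<bar>x $ i\<bar> < (1 + \<epsilon>) * M")
  case False
  moreover have "M \<le> (1 + \<epsilon>) * M" using assms by simp
  ultimately have "M \<le> \<bar>x $ i\<bar>" by linarith
  hence "M^2 \<le> (x $ i)^2" using assms by (metis abs_le_square_iff abs_of_pos)
  thus ?thesis using \<open>\<not> _\<close> assms by (simp add: alpha_def)
qed (simp add: alpha_def)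

lemma reweighting_coord_bound:
  fixes r x y a M :: real
  assumes "0 \<le> r" "M \<noteq> 0" "a = 1 \<or> a = x^2 / M^2"
  shows "2 * r * x * y - r * x^2 + M^2 * (r * a - r) \<le> r * a * y^2"
  using assms(3)
proof
  assume "a = 1"
  moreover have "0 \<le> r * (y - x)^2" using assms(1) by simp
  ultimately show ?thesis by (simp add: power2_eq_square algebra_simps)
next
  assume a: "a = x^2 / M^2"
  have "r * a * y^2 - (2 * r * x * y - r * x^2 + M^2 * (r * a - r)) = r * (x * y / M - M)^2"
    using assms(2) by (simp add: a power2_eq_square field_simps)
  moreover have "0 \<le> r * (x * y / M - M)^2" using assms(1) by simp
  ultimately show ?thesis by linarith
qed

lemma l1norm_eq_sum:
  assumes "\<And>i. 0 \<le> r $ i"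
  shows "l1norm r = (\<Sum>i\<in>UNIV. r $ i)"
  unfolding l1norm_def using assms by simp

definition reweighting_invariant :: "real \<Rightarrow> real ^ 'm ^ 'n \<Rightarrow> real ^ 'n \<Rightarrow> real ^ 'm \<Rightarrow> bool" where
  "reweighting_invariant M A b r \<longleftrightarrow>
     (\<forall>i. 0 < r $ i) \<and> (\<forall>y. A *v y = b \<longrightarrow> M^2 * (l1norm r - 1) \<le> wsq r y)"

lemma reweighting_invariant_uniform:
  fixes A :: "real ^ 'm ^ 'n"
  shows "reweighting_invariant M A b (\<chi> i. 1 / real CARD('m::finite))"
proof -
  have "0 \<le> wsq (\<chi> i::'m. 1 / real CARD('m)) y" for y
    unfolding wsq_def by (intro sum_nonneg) simp
  thus ?thesis by (simp add: reweighting_invariant_def l1norm_def)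
qed

lemma reweighting_invariant_step:
  fixes A :: "real ^ 'm ^ 'n"
  assumes inv: "reweighting_invariant M A b r" and solvable: "A *v x0 = b"
    and "0 < \<epsilon>" "0 < M"
  shows "reweighting_invariant M A b (\<chi> i. r $ i * alpha \<epsilon> M (argmin_x A r b) $ i)"
proof -
  define x where "x = argmin_x A r b"
  define a where "a = alpha \<epsilon> M x"
  define r' where "r' = (\<chi> i. r $ i * a $ i)"
  have r_pos: "\<And>i. 0 < r $ i" using inv by (simp add: reweighting_invariant_def)
  have a_ge_one: "\<And>i. 1 \<le> a $ i" using alpha_ge_one \<open>0 < \<epsilon>\<close> \<open>0 < M\<close> by (simp add: a_def)
  have r'_pos: "\<And>i. 0 < r' $ i"
    using r_pos a_ge_one by (simp add: r'_def) (meson less_le_trans mult_pos_pos zero_less_one)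
  have x_energy: "M^2 * (l1norm r - 1) \<le> wsq r x"
    using inv argmin_x_first_order(1)[OF r_pos solvable] by (simp add: reweighting_invariant_def x_def)
  have "M^2 * (l1norm r' - 1) \<le> wsq r' y" if y: "A *v y = b" for y
  proof -
    have "wsq r x \<le> (\<Sum>i\<in>UNIV. r $ i * x $ i * y $ i)"
      using argmin_x_first_order(2)[OF r_pos solvable y]
      by (simp add: x_def wsq_def sum_subtractf power2_eq_square algebra_simps)
    moreover have "2 * r $ i * x $ i * y $ i - r $ i * (x $ i)^2 + M^2 * (r $ i * a $ i - r $ i)
        \<le> r $ i * a $ i * (y $ i)^2" for i
      by (rule reweighting_coord_bound)
        (use r_pos \<open>0 < M\<close> in \<open>auto simp: a_def alpha_def less_imp_le\<close>)
    hence "(\<Sum>i\<in>UNIV. 2 * r $ i * x $ i * y $ i - r $ i * (x $ i)^2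
        + M^2 * (r' $ i - r $ i)) \<le> wsq r' y"
      unfolding wsq_def r'_def by (intro sum_mono) simp
    moreover have "l1norm r' - l1norm r = (\<Sum>i\<in>UNIV. r' $ i - r $ i)"
      using l1norm_eq_sum r_pos r'_pos less_imp_le by (metis sum_subtractf)
    hence "(\<Sum>i\<in>UNIV. 2 * r $ i * x $ i * y $ i - r $ i * (x $ i)^2 + M^2 * (r' $ i - r $ i))
        = 2 * (\<Sum>i\<in>UNIV. r $ i * x $ i * y $ i) - wsq r x + M^2 * (l1norm r' - l1norm r)"
      by (simp add: sum.distrib sum_subtractf sum_distrib_left[symmetric]
          right_diff_distrib[symmetric] wsq_def mult.assoc)
    ultimately show ?thesis using x_energy by (simp add: algebra_simps)
  qed
  thus ?thesis using r'_pos by (simp add: reweighting_invariant_def r'_def a_def x_def)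
qed

lemma alg_run_Running_invariant:
  fixes A :: "real ^ 'm ^ 'n"
  assumes "A *v x0 = b" "0 < \<epsilon>" "0 < M"
  shows "alg_run A b \<epsilon> M k = Running r tp s \<Longrightarrow> reweighting_invariant M A b r"
proof (induction k arbitrary: r tp s)
  case 0
  thus ?case using reweighting_invariant_uniform[of M A b] by simp
next
  case (Suc k)
  then obtain r0 tp0 s0 where "alg_run A b \<epsilon> M k = Running r0 tp0 s0"
    "alg_step A b \<epsilon> M r0 tp0 s0 = Running r tp s"
    by (auto split: alg_state.splits)
  thus ?case using Suc.IH reweighting_invariant_step[OF _ assms]
    by (auto simp: alg_step_def Let_def split: if_splits)
qed

lemma alg_run_ReturnAfterLoop:
  fixes A :: "real ^ 'm ^ 'n"
  assumes "A *v x0 = b" "0 < \<epsilon>" "0 < M"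
  shows "alg_run A b \<epsilon> M k = ReturnAfterLoop rbar \<Longrightarrow>
    \<exists>r. reweighting_invariant M A b r \<and> 1 / \<epsilon> < l1norm r \<and> rbar = (1 / l1norm r) *\<^sub>R r"
proof (induction k)
  case (Suc k)
  show ?case
  proof (cases "alg_run A b \<epsilon> M k")
    case (Running r tp s)
    thus ?thesis using Suc.prems alg_run_Running_invariant[OF assms Running]
      by (auto simp: alg_step_def Let_def split: if_splits)
  qed (use Suc in auto)
qed simp

lemma wsq_normalized_lower_bound:
  fixes A :: "real ^ 'm ^ 'n"
  assumes "reweighting_invariant M A b r" "1 / \<epsilon> < l1norm r" "0 < \<epsilon>" "A *v y = b"
  shows "(1 - \<epsilon>) * M^2 \<le> wsq ((1 / l1norm r) *\<^sub>R r) y"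
proof -
  define L where "L = l1norm r"
  have "0 < 1 / \<epsilon>" using assms(3) by simp
  hence "0 < L" using assms(2) unfolding L_def by linarith
  hence "1 / L < \<epsilon>" using assms(2,3) by (simp add: L_def field_simps)
  have "M^2 * (L - 1) \<le> wsq r y" using assms(1,4) by (simp add: reweighting_invariant_def L_def)
  hence "M^2 * (L - 1) / L \<le> wsq r y / L" using \<open>0 < L\<close> by (simp add: divide_right_mono)
  moreover have "M^2 * (L - 1) / L = M^2 * (1 - 1 / L)" using \<open>0 < L\<close> by (simp add: field_simps)
  moreover have "M^2 * (1 - \<epsilon>) \<le> M^2 * (1 - 1 / L)"
    using \<open>1 / L < \<epsilon>\<close> by (intro mult_left_mono) auto
  moreover have "wsq ((1 / L) *\<^sub>R r) y = wsq r y / L" by (simp add: wsq_def sum_divide_distrib)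
  ultimately show ?thesis by (simp add: L_def mult.commute)
qed

theorem lemma4p5:
  fixes A :: "real ^ 'm ^ 'n" and b :: "real ^ 'n" and \<epsilon> M :: real
    and rbar :: "real ^ 'm" and k :: nat
  assumes "b \<in> range (\<lambda>x. A *v x)"
    and "0 < \<epsilon>" and "\<epsilon> \<le> 1" and "0 < M"
    and "alg_run A b \<epsilon> M k = ReturnAfterLoop rbar"
  shows "energy A rbar b \<ge> (1 - \<epsilon>)^2 * M^2"
proof -
  obtain x0 where x0: "A *v x0 = b" using assms(1) by auto
  then obtain r where inv: "reweighting_invariant M A b r" and "1 / \<epsilon> < l1norm r"
    and rbar: "rbar = (1 / l1norm r) *\<^sub>R r"
    using alg_run_ReturnAfterLoop assms(2,4,5) by blast
  have "(1 - \<epsilon>)^2 * M^2 \<le> (1 - \<epsilon>) * M^2"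
    using assms(2,3) by (intro mult_right_mono) (auto simp: power2_eq_square mult_left_le)
  also have "\<dots> \<le> wsq rbar y" if "A *v y = b" for y
    using wsq_normalized_lower_bound[OF inv \<open>1 / \<epsilon> < _\<close> assms(2) that] by (simp add: rbar)
  finally show ?thesis
    unfolding energy_def using x0 by (intro cInf_greatest) auto
qed

end
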